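(* Let $q$ be a power of the prime $p$ and $n$ a positive integer. Let $f, h, k\in \mathbb{F}_q[x]$ with $k(\mathbb{F}_q)\subseteq\mathbb{F}_q^*$, and let $P(x)=f(\mathrm{Tr}_{q^n/q}(x))+k(\mathrm{Tr}_{q^n/q}(x))\cdot L_h(x)$. Then $P$ is a permutation polynomial of $\mathbb{F}_{q^n}$ if and only if $\gcd\left(h(x), \frac{x^n-1}{x-1}\right)=1$ and $Q(x)=n\cdot f(x)+h(1)k(x)\cdot x$ induces a permutation of $\mathbb{F}_q$. More specifically, $P$ is a permutation polynomial of $\mathbb{F}_{q^n}$ if and only if one of the following holds: (i) $p\mid n$, $\gcd(h(x), x^n-1)=1$, and $k(x)\cdot x$ is a permutation polynomial of $\mathbb{F}_q$; (ii) $p\nmid n$, $\gcd(h(x), x^n-1)=x-1$, and $f$ is a permutation polynomial of $\mathbb{F}_q$; (iii) $p\nmid n$, $\gcd(h(x), x^n-1)=1$, and $n f(x)+h(1)\cdot k(x)\cdot x$ is a permutation polynomial of $\mathbb{F}_q$.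
   Context: For $u(x)=\sum_{i=0}^m a_i x^i\in\mathbb{F}_q[x]$, its linearized $q$-associate is $L_u(x)=\sum_{i=0}^m a_i x^{q^i}$. $\mathrm{Tr}_{q^n/q}(x)=x+x^q+\cdots+x^{q^{n-1}}$. A permutation polynomial of a finite field is a polynomial inducing a bijection of it. *)

theory Defs
  imports "HOL-Computational_Algebra.Polynomial_Factorial"
begin

definition subfieldq :: "nat \<Rightarrow> 'a::field set" where
  "subfieldq q = {x. x ^ q = x}"

definition trace_qn :: "nat \<Rightarrow> nat \<Rightarrow> 'a::field \<Rightarrow> 'a" where
  "trace_qn q n x = (\<Sum>i<n. x ^ (q ^ i))"

definition linq :: "nat \<Rightarrow> 'a::field poly \<Rightarrow> 'a \<Rightarrow> 'a" where
  "linq q u x = (\<Sum>i\<le>degree u. coeff u i * x ^ (q ^ i))"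

end

(*
  Write Tr for the trace and L_u for the linearized q-associate of u in F_q[x]. The maps L_u
  are F_q-linear, L_a o L_b = L_(a b), Tr = L_Phi for Phi = 1 + x + ... + x^(n-1), and
  Tr o L_h = h(1) Tr; hence Tr o P = Q o Tr with Q(t) = n f(t) + h(1) k(t) t. Since Tr maps
  onto F_q, a bijective P forces Q to permute F_q. Conversely, if Q is injective on F_q then
  P x = P y gives Tr x = Tr y and, as k does not vanish on F_q, L_h x = L_h y. So P permutes
  F_(q^n) iff Q permutes F_q and ker Tr and ker L_h meet trivially. By Bezout that happens iff
  gcd(h, Phi) = 1: a nonconstant common divisor d divides x^n - 1 = d e, and L_d kills the
  image of L_e, which is nonzero because L_e is a polynomial of degree q^(deg e) < q^n.
  The cases (i)-(iii) compare gcd(h, Phi) with gcd(h, x^n - 1) according to whether h(1)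
  and n vanish in F_q, using x^n - 1 = (x - 1) Phi and Phi(1) = n.
*)

theory Submission
  imports Defs "HOL-Computational_Algebra.Primes"
begin

text \<open>The library version \<open>finite_field_power_card_eq_same\<close> needs the sort \<open>finite_field\<close>,
  which a type variable of sort \<open>{finite, field_gcd}\<close> does not have.\<close>
lemma power_card_UNIV_eq:
  fixes x :: "'a::field"
  assumes "finite (UNIV :: 'a set)"
  shows "x ^ card (UNIV :: 'a set) = x"
proof (cases "x = 0")
  case True
  then show ?thesis using assms by (simp add: finite_UNIV_card_ge_0)
next
  case False
  define U where "U = UNIV - {0 :: 'a}"
  have fin: "finite U" using assms by (simp add: U_def)
  have "bij_betw ((*) x) U U"
    by (rule bij_betw_byWitness[of _ "\<lambda>y. y / x"]) (use False in \<open>auto simp: U_def\<close>)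
  then have "prod ((*) x) U = prod id U"
    using prod.reindex_bij_betw[of "(*) x" U U id] by simp
  then have "x ^ card U * prod id U = 1 * prod id U"
    by (simp add: prod.distrib)
  moreover have "prod id U \<noteq> 0" using fin by (simp add: U_def)
  ultimately have "x ^ card U = 1" by simp
  moreover have "card (UNIV :: 'a set) = Suc (card U)"
    using assms by (simp add: U_def finite_UNIV_card_ge_0)
  ultimately show ?thesis by simp
qed

lemma bij_betw_self_iff_inj_on:
  "finite A \<Longrightarrow> g ` A \<subseteq> A \<Longrightarrow> bij_betw g A A \<longleftrightarrow> inj_on g A"
  by (auto simp: bij_betw_def endo_inj_surj)

lemma bij_betw_scale_iff:
  fixes c :: "'a::field"
  assumes "c \<noteq> 0" "finite A" "g ` A \<subseteq> A" "(\<lambda>x. c * g x) ` A \<subseteq> A"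
  shows "bij_betw (\<lambda>x. c * g x) A A \<longleftrightarrow> bij_betw g A A"
  using assms by (simp add: bij_betw_self_iff_inj_on inj_on_def)

lemma bij_betw_of_semiconj:
  assumes "range T = A" "finite A" "surj P" "\<And>x. T (P x) = Q (T x)"
  shows "bij_betw Q A A"
proof -
  have "Q ` A = range (T \<circ> P)" unfolding assms(1)[symmetric] by (auto simp: assms(4) image_comp)
  also have "\<dots> = T ` range P" by (simp add: image_comp)
  also have "\<dots> = A" using assms(1,3) by simp
  finally show ?thesis using assms(2) by (simp add: bij_betw_def eq_card_imp_inj_on)
qed

section \<open>Greatest common divisors with \<open>x ^ n - 1\<close>\<close>

definition geometric_poly :: "nat \<Rightarrow> 'a::comm_ring_1 poly" where
  "geometric_poly n = (\<Sum>i<n. monom 1 i)"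

lemma coeff_geometric_poly: "coeff (geometric_poly n) i = (if i < n then 1 else 0)"
  by (simp add: geometric_poly_def coeff_sum coeff_monom)

lemma poly_geometric_poly_1: "poly (geometric_poly n) 1 = of_nat n"
  by (simp add: geometric_poly_def poly_sum poly_monom)

lemma degree_geometric_poly_le: "degree (geometric_poly n) \<le> n - 1"
  by (rule degree_le) (auto simp: coeff_geometric_poly)

lemma geometric_poly_nonzero: "n > 0 \<Longrightarrow> geometric_poly n \<noteq> 0"
  by (metis coeff_0 coeff_geometric_poly zero_neq_one)

lemma X_power_minus_1_eq: "[:0, 1:] ^ n - 1 = [:-1, 1:] * geometric_poly n"
proof -
  have G: "geometric_poly n = (\<Sum>i<n. [:0, 1:] ^ i)"
    by (simp add: geometric_poly_def monom_altdef)
  have L: "[:-1, 1:] = [:0, 1:] - (1 :: 'a poly)"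
    by (simp add: one_pCons)
  show ?thesis unfolding G L by (rule power_diff_1_eq)
qed

lemma X_power_minus_1_nonzero: "n > 0 \<Longrightarrow> [:0, 1:] ^ n - 1 \<noteq> (0 :: 'a::comm_ring_1 poly)"
proof
  assume "n > 0" "[:0, 1:] ^ n - 1 = (0 :: 'a poly)"
  then have "poly ([:0, 1:] ^ n - 1) (0 :: 'a) = 0" by simp
  with \<open>n > 0\<close> show False by (simp add: power_0_left)
qed

lemma degree_X_power_minus_1_le: "degree ([:0, 1:] ^ n - 1 :: 'a::comm_ring_1 poly) \<le> n"
  by (rule degree_diff_le) (simp_all add: degree_linear_power)

lemma X_power_minus_1_div: "([:0, 1:] ^ n - 1) div [:-1, 1 :: 'a::field:] = geometric_poly n"
  unfolding X_power_minus_1_eq by (rule nonzero_mult_div_cancel_left) simp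

lemma normalize_eq_self_iff_monic:
  fixes p :: "'a::field_gcd poly"
  assumes "p \<noteq> 0"
  shows "normalize p = p \<longleftrightarrow> lead_coeff p = 1"
proof
  assume "normalize p = p"
  then have "lead_coeff p = coeff (normalize p) (degree p)" by (simp only:)
  also have "\<dots> = lead_coeff p / unit_factor (lead_coeff p)" by (rule coeff_normalize)
  also have "unit_factor (lead_coeff p) = lead_coeff p"
    using assms by (intro is_unit_unit_factor) (simp add: dvd_field_iff)
  finally show "lead_coeff p = 1" using assms by simp
next
  assume "lead_coeff p = 1"
  then show "normalize p = p" unfolding normalize_poly_eq_map_poly by simp
qed

lemma gcd_neq_1_if_poly_1_eq_0:
  fixes a b :: "'a::field_gcd poly"
  assumes "poly a 1 = 0" "poly b 1 = 0"
  shows "gcd a b \<noteq> 1"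
proof
  assume "gcd a b = 1"
  moreover have "[:-1, 1:] dvd gcd a b" using assms by (simp add: poly_eq_0_iff_dvd)
  ultimately show False by (simp add: is_unit_poly_iff)
qed

lemma gcd_neq_linear_if_poly_1_neq_0:
  fixes a b :: "'a::field_gcd poly"
  assumes "poly a 1 \<noteq> 0"
  shows "gcd a b \<noteq> [:-1, 1:]"
  using assms gcd_dvd1[of a b] by (metis poly_eq_0_iff_dvd)

lemma gcd_X_power_minus_1_eq:
  fixes h :: "'a::field_gcd poly"
  assumes "poly h 1 \<noteq> 0"
  shows "gcd h ([:0, 1:] ^ n - 1) = gcd h (geometric_poly n)"
proof -
  have "prime_elem [:-1, 1 :: 'a:]" by (rule prime_elem_linear_field_poly) simp
  then have "coprime [:-1, 1:] h"
    by (rule prime_elem_imp_coprime) (use assms in \<open>simp add: poly_eq_0_iff_dvd\<close>)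
  then show ?thesis
    unfolding X_power_minus_1_eq by (rule gcd_mult_right_left_cancel[OF coprime_commute[THEN iffD1]])
qed

lemma gcd_X_power_minus_1_eq_linear_iff:
  fixes h :: "'a::field_gcd poly"
  assumes "poly h 1 = 0" and "of_nat n \<noteq> (0 :: 'a)"
  shows "gcd h ([:0, 1:] ^ n - 1) = [:-1, 1:] \<longleftrightarrow> gcd h (geometric_poly n) = 1"
proof -
  obtain h' where h: "h = [:-1, 1:] * h'"
    using assms(1) by (auto simp: poly_eq_0_iff_dvd)
  have "prime_elem [:-1, 1 :: 'a:]" by (rule prime_elem_linear_field_poly) simp
  then have "coprime [:-1, 1:] (geometric_poly n :: 'a poly)"
    by (rule prime_elem_imp_coprime)
      (use assms(2) in \<open>simp add: poly_eq_0_iff_dvd[symmetric] poly_geometric_poly_1\<close>)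
  then have "gcd h (geometric_poly n) = gcd h' (geometric_poly n)"
    unfolding h by (rule gcd_mult_left_left_cancel[OF coprime_commute[THEN iffD1]])
  moreover have "normalize [:-1, 1 :: 'a:] = [:-1, 1:]"
    by (simp add: normalize_poly_eq_map_poly)
  then have "gcd h ([:0, 1:] ^ n - 1) = [:-1, 1:] * gcd h' (geometric_poly n)"
    unfolding h X_power_minus_1_eq gcd_mult_left normalize_mult by simp
  moreover have "[:-1, 1 :: 'a:] \<noteq> 0" by simp
  ultimately show ?thesis by (metis mult_left_cancel mult.right_neutral)
qed

section \<open>Linearized polynomials\<close>

lemma linq_eq_sum:
  "degree u < N \<Longrightarrow> linq q u x = (\<Sum>i<N. coeff u i * x ^ q ^ i)"
  unfolding linq_def by (rule sum.mono_neutral_left) (auto simp: coeff_eq_0)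

lemma linq_add: "linq q (u + v) x = linq q u x + linq q v x"
proof -
  define N where "N = Suc (degree u + degree v)"
  have "degree (u + v) < N" "degree u < N" "degree v < N"
    using degree_add_le_max[of u v] by (auto simp: N_def)
  then show ?thesis by (simp add: linq_eq_sum[of _ N] sum.distrib algebra_simps)
qed

lemma linq_uminus: "linq q (- u) x = - linq q u x"
  by (simp add: linq_def sum_negf)

lemma linq_diff: "linq q (u - v) x = linq q u x - linq q v x"
  using linq_add[of q u "- v" x] by (simp add: linq_uminus)

lemma linq_smult: "linq q (smult c u) x = c * linq q u x"
  by (cases "c = 0") (auto simp: linq_def sum_distrib_left mult.assoc)

lemma linq_pCons: "linq q (pCons c u) x = c * x + linq q u (x ^ q)"
proof -
  define N where "N = Suc (degree u)"
  have N: "degree (pCons c u) < Suc N" "degree u < N"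
    by (auto simp: N_def degree_pCons_le le_less_trans)
  show ?thesis
    unfolding linq_eq_sum[OF N(1)] linq_eq_sum[OF N(2)] sum.lessThan_Suc_shift
    by (simp add: power_mult[symmetric] mult.commute)
qed

lemma linq_monom: "linq q (monom c k) x = c * x ^ q ^ k"
  using linq_eq_sum[of "monom c k" "Suc k" q x]
  by (cases "c = 0") (auto simp: degree_monom_eq coeff_monom)

lemma linq_one: "linq q 1 x = x"
  using linq_monom[of q 1 0 x] by (simp add: monom_0 one_pCons)

lemma trace_qn_eq_linq:
  fixes x :: "'a::field"
  shows "trace_qn q n x = linq q (geometric_poly n) x"
proof -
  have "degree (geometric_poly n :: 'a poly) < Suc n"
    by (rule le_less_trans[OF degree_geometric_poly_le]) simp
  then show ?thesis
    by (simp add: linq_eq_sum coeff_geometric_poly trace_qn_def)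
qed

lemma card_linq_fiber_le:
  fixes u :: "'a::field poly"
  assumes "q > 1" and "u \<noteq> 0"
  shows "card {x. linq q u x = t} \<le> q ^ degree u"
proof -
  define d where "d = degree u"
  define U where "U = (\<Sum>i\<le>d. monom (coeff u i) (q ^ i)) - [:t:]"
  have poly_U: "poly U x = linq q u x - t" for x
    by (simp add: U_def d_def linq_def poly_sum poly_monom)
  have coeff_U: "coeff U j = (\<Sum>i\<le>d. if q ^ i = j then coeff u i else 0) - (if j = 0 then t else 0)" for j
    by (simp add: U_def coeff_sum coeff_pCons')
  have "coeff U (q ^ d) = (\<Sum>i\<le>d. if i = d then coeff u i else 0)"
    using assms(1) by (simp add: coeff_U power_inject_exp)
  then have "coeff U (q ^ d) = coeff u d" by simp
  then have "U \<noteq> 0" using assms(2) by (auto simp: d_def)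
  moreover have "degree U \<le> q ^ d"
  proof (rule degree_le, intro allI impI)
    fix j assume j: "q ^ d < j"
    have "q ^ i \<noteq> j" if "i \<le> d" for i
      using j power_increasing[OF that, of q] assms(1) by linarith
    then show "coeff U j = 0" using j by (simp add: coeff_U)
  qed
  moreover have "{x. linq q u x = t} = {x. poly U x = 0}" by (simp add: poly_U)
  ultimately show ?thesis
    using card_poly_roots_bound[of U] by (simp add: d_def)
qed

section \<open>The Frobenius \<open>x \<mapsto> x ^ q\<close> in characteristic \<open>p\<close>\<close>

lemma finite_subfieldq: "q > 1 \<Longrightarrow> finite (subfieldq q :: 'a::field set)"
  and card_subfieldq_le: "q > 1 \<Longrightarrow> card (subfieldq q :: 'a::field set) \<le> q"
proof -
  assume q: "q > 1"
  define u where "u = monom (1 :: 'a) q + [:0, -1:]"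
  have "degree u = q" using q by (simp add: u_def degree_add_eq_left degree_monom_eq)
  then have "u \<noteq> 0" using q by auto
  moreover have "{x. poly u x = 0} = subfieldq q"
    by (simp add: u_def subfieldq_def poly_monom)
  ultimately show "finite (subfieldq q :: 'a set)"
    and "card (subfieldq q :: 'a set) \<le> q"
    using poly_roots_finite card_poly_roots_bound \<open>degree u = q\<close> by metis+
qed

abbreviation over_subfieldq :: "nat \<Rightarrow> 'a::field poly \<Rightarrow> bool" where
  "over_subfieldq q u \<equiv> \<forall>i. coeff u i \<in> subfieldq q"

context
  fixes q m :: nat
  assumes prime_char: "prime CHAR('a::field_gcd)" and q_eq: "q = CHAR('a) ^ m" and m_pos: "m > 0"
begin

lemma q_gt_1: "q > 1"
  using prime_char q_eq m_pos by (metis one_less_power prime_gt_1_nat)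

lemma frobenius_add: "(x + y :: 'a) ^ q ^ j = x ^ q ^ j + y ^ q ^ j"
  by (rule freshmans_dream'[OF prime_char, where n = "m * j"]) (simp add: q_eq power_mult)

lemma frobenius_sum: "(sum g A :: 'a) ^ q ^ j = (\<Sum>i\<in>A. g i ^ q ^ j)"
  by (rule freshmans_dream_sum'[OF prime_char, where n = "m * j"]) (simp add: q_eq power_mult)

lemma frobenius_diff: "(x - y :: 'a) ^ q ^ j = x ^ q ^ j - y ^ q ^ j"
  using frobenius_add[of "x - y" y j] by (simp add: algebra_simps)

lemma subfieldq_power_q_power: "c \<in> subfieldq q \<Longrightarrow> (c :: 'a) ^ q ^ j = c"
  by (induction j) (simp_all add: subfieldq_def power_mult mult.commute[of q])

lemma subfieldq_zero: "(0 :: 'a) \<in> subfieldq q"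
  using q_gt_1 by (simp add: subfieldq_def)

lemma subfieldq_one: "(1 :: 'a) \<in> subfieldq q"
  by (simp add: subfieldq_def)

lemma subfieldq_add: "a \<in> subfieldq q \<Longrightarrow> b \<in> subfieldq q \<Longrightarrow> (a + b :: 'a) \<in> subfieldq q"
  using frobenius_add[of a b 1] by (simp add: subfieldq_def)

lemma subfieldq_diff: "a \<in> subfieldq q \<Longrightarrow> b \<in> subfieldq q \<Longrightarrow> (a - b :: 'a) \<in> subfieldq q"
  using frobenius_diff[of a b 1] by (simp add: subfieldq_def)

lemma subfieldq_mult: "a \<in> subfieldq q \<Longrightarrow> b \<in> subfieldq q \<Longrightarrow> (a * b :: 'a) \<in> subfieldq q"
  by (simp add: subfieldq_def power_mult_distrib)

lemma subfieldq_of_nat: "(of_nat k :: 'a) \<in> subfieldq q"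
  by (induction k) (simp_all add: subfieldq_zero subfieldq_one subfieldq_add)

lemma subfieldq_poly: "over_subfieldq q u \<Longrightarrow> x \<in> subfieldq q \<Longrightarrow> poly u (x :: 'a) \<in> subfieldq q"
proof (induction u)
  case (pCons a u)
  then show ?case
    using spec[OF pCons.prems(1), of 0] spec[OF pCons.prems(1), of "Suc _"]
    by (auto intro!: subfieldq_add subfieldq_mult)
qed (simp add: subfieldq_zero)

lemma linq_arg_add: "linq q u (x + y :: 'a) = linq q u x + linq q u y"
  by (simp add: linq_def frobenius_add sum.distrib algebra_simps)

lemma linq_arg_diff: "linq q u (x - y :: 'a) = linq q u x - linq q u y"
  by (simp add: linq_def frobenius_diff sum_subtractf algebra_simps)

lemma linq_arg_zero: "linq q u (0 :: 'a) = 0"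
  using linq_arg_diff[of u 0 0] by simp

lemma linq_power_q:
  assumes "over_subfieldq q b"
  shows "linq q b (x :: 'a) ^ q = linq q b (x ^ q)"
proof -
  have "linq q b x ^ q = (\<Sum>i\<le>degree b. (coeff b i * x ^ q ^ i) ^ q)"
    using frobenius_sum[of _ _ 1] by (simp add: linq_def)
  also have "\<dots> = linq q b (x ^ q)"
    using assms by (simp add: linq_def power_mult_distrib subfieldq_def power_mult[symmetric] mult.commute)
  finally show ?thesis .
qed

lemma linq_mult:
  assumes "over_subfieldq q b"
  shows "linq q (a * b) (x :: 'a) = linq q a (linq q b x)"
proof (induction a arbitrary: x)
  case (pCons c a)
  have "linq q (pCons c a * b) x = c * linq q b x + linq q (a * b) (x ^ q)"
    by (simp add: linq_add linq_smult linq_pCons)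
  also have "\<dots> = linq q (pCons c a) (linq q b x)"
    using assms by (simp add: pCons.IH linq_pCons linq_power_q)
  finally show ?case .
qed (simp add: linq_def)

lemma linq_dvd_kernel:
  assumes "over_subfieldq q d" "d dvd u" "linq q d (z :: 'a) = 0"
  shows "linq q u z = 0"
proof -
  obtain c where "u = c * d" using assms(2) by (metis dvd_def mult.commute)
  then show ?thesis using assms(1,3) by (simp add: linq_mult linq_arg_zero)
qed

abbreviation frobenius_poly :: "'a poly \<Rightarrow> 'a poly" where
  "frobenius_poly \<equiv> map_poly (\<lambda>c. c ^ q)"

lemma coeff_frobenius_poly: "coeff (frobenius_poly u) i = coeff u i ^ q"
  using q_gt_1 by (simp add: coeff_map_poly)

lemma frobenius_poly_eq_iff: "frobenius_poly u = u \<longleftrightarrow> over_subfieldq q u"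
  by (auto simp: poly_eq_iff coeff_frobenius_poly subfieldq_def)

lemma frobenius_poly_add: "frobenius_poly (a + b) = frobenius_poly a + frobenius_poly b"
  using frobenius_add[of _ _ 1] by (simp add: poly_eq_iff coeff_frobenius_poly)

lemma frobenius_poly_mult: "frobenius_poly (a * b) = frobenius_poly a * frobenius_poly b"
proof (rule poly_eqI)
  fix k
  have "coeff (frobenius_poly (a * b)) k = (\<Sum>i\<le>k. coeff a i * coeff b (k - i)) ^ q ^ 1"
    by (simp add: coeff_frobenius_poly coeff_mult)
  also have "\<dots> = coeff (frobenius_poly a * frobenius_poly b) k"
    unfolding frobenius_sum by (simp add: coeff_mult coeff_frobenius_poly power_mult_distrib)
  finally show "coeff (frobenius_poly (a * b)) k = coeff (frobenius_poly a * frobenius_poly b) k" .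
qed

lemma frobenius_poly_dvd: "a dvd b \<Longrightarrow> frobenius_poly a dvd frobenius_poly b"
  by (elim dvdE) (simp add: frobenius_poly_mult)

lemma over_subfieldq_div:
  fixes a b :: "'a poly"
  assumes "over_subfieldq q a" "over_subfieldq q b" "b dvd a"
  shows "over_subfieldq q (a div b)"
proof (cases "b = 0")
  case False
  have "b * frobenius_poly (a div b) = frobenius_poly (b * (a div b))"
    using assms(2) by (simp add: frobenius_poly_mult frobenius_poly_eq_iff[symmetric])
  also have "\<dots> = b * (a div b)"
    using assms(1,3) by (simp add: frobenius_poly_eq_iff[symmetric])
  finally show ?thesis using False by (simp add: frobenius_poly_eq_iff[symmetric])
qed (simp add: subfieldq_zero)

lemma over_subfieldq_gcd:
  fixes a b :: "'a poly"
  assumes "over_subfieldq q a" "over_subfieldq q b"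
  shows "over_subfieldq q (gcd a b)"
proof (cases "gcd a b = 0")
  case False
  define g where "g = gcd a b"
  have fixed: "frobenius_poly a = a" "frobenius_poly b = b"
    using assms by (simp_all add: frobenius_poly_eq_iff)
  obtain s t where st: "s * a + t * b = g"
    using bezout_coefficients_fst_snd[of a b] g_def by blast
  have "frobenius_poly g = frobenius_poly s * a + frobenius_poly t * b"
    unfolding st[symmetric] frobenius_poly_add frobenius_poly_mult fixed by (rule refl)
  then have g_dvd: "g dvd frobenius_poly g"
    unfolding g_def by (simp only: dvd_add dvd_mult gcd_dvd1 gcd_dvd2)
  have "frobenius_poly g dvd frobenius_poly a" "frobenius_poly g dvd frobenius_poly b"
    by (simp_all add: g_def frobenius_poly_dvd)
  then have dvd_g: "frobenius_poly g dvd g"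
    unfolding fixed g_def by (rule gcd_greatest)
  have "g \<noteq> 0" "normalize g = g"
    using False by (simp_all add: g_def)
  then have "lead_coeff g = 1"
    using normalize_eq_self_iff_monic by blast
  then have "normalize (frobenius_poly g) = frobenius_poly g"
    using q_gt_1 lead_coeff_map_poly_nz[of "\<lambda>c. c ^ q" g] by (simp add: normalize_poly_eq_map_poly)
  then have "frobenius_poly g = g"
    using associated_eqI[OF dvd_g g_dvd] \<open>normalize g = g\<close> by blast
  then show ?thesis unfolding g_def frobenius_poly_eq_iff .
qed (simp add: subfieldq_zero)

lemma over_subfieldq_geometric_poly: "over_subfieldq q (geometric_poly n :: 'a poly)"
  by (simp add: coeff_geometric_poly subfieldq_zero subfieldq_one)

lemma over_subfieldq_X_power_minus_1: "over_subfieldq q ([:0, 1:] ^ n - 1 :: 'a poly)"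
  by (simp add: monom_altdef[of 1 n, simplified, symmetric] coeff_monom coeff_1
      subfieldq_diff subfieldq_zero subfieldq_one)

section \<open>The trace of a finite field\<close>

lemma trace_qn_add: "trace_qn q n (x + y :: 'a) = trace_qn q n x + trace_qn q n y"
  by (simp add: trace_qn_eq_linq linq_arg_add)

lemma trace_qn_sum: "trace_qn q n (sum g A :: 'a) = (\<Sum>a\<in>A. trace_qn q n (g a))"
  by (simp add: trace_qn_def frobenius_sum sum.swap[of _ A])

lemma trace_qn_diff: "trace_qn q n (x - y :: 'a) = trace_qn q n x - trace_qn q n y"
  by (simp add: trace_qn_eq_linq linq_arg_diff)

lemma trace_qn_zero: "trace_qn q n (0 :: 'a) = 0"
  by (simp add: trace_qn_eq_linq linq_arg_zero)

lemma trace_qn_mult_subfieldq: "c \<in> subfieldq q \<Longrightarrow> trace_qn q n (c * x :: 'a) = c * trace_qn q n x"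
  by (simp add: trace_qn_def power_mult_distrib subfieldq_power_q_power sum_distrib_left)

lemma trace_qn_subfieldq: "c \<in> subfieldq q \<Longrightarrow> trace_qn q n (c :: 'a) = of_nat n * c"
  by (simp add: trace_qn_def subfieldq_power_q_power)

context
  fixes n :: nat
  assumes n_pos: "n > 0" and card_UNIV: "card (UNIV :: 'a set) = q ^ n"
begin

lemma finite_field_UNIV: "finite (UNIV :: 'a set)"
  using card_UNIV q_gt_1 by (intro card_ge_0_finite) simp

lemma power_q_power_n: "(x :: 'a) ^ q ^ n = x"
  using power_card_UNIV_eq[OF finite_field_UNIV] card_UNIV by metis

lemma trace_qn_in_subfieldq: "trace_qn q n (x :: 'a) \<in> subfieldq q"
proof -
  have "trace_qn q n x ^ q ^ 1 = (\<Sum>i<n. (x ^ q ^ i) ^ q ^ 1)"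
    unfolding trace_qn_def by (rule frobenius_sum)
  then have "trace_qn q n x ^ q = (\<Sum>i<n. x ^ q ^ Suc i)"
    by (simp add: power_mult[symmetric] mult.commute)
  also have "\<dots> = trace_qn q n x"
  proof -
    have "(\<Sum>i<n. x ^ q ^ Suc i) + x = (\<Sum>i<Suc n. x ^ q ^ i)"
      by (simp only: sum.lessThan_Suc_shift) simp
    also have "\<dots> = trace_qn q n x + x"
      by (simp add: trace_qn_def power_q_power_n)
    finally show ?thesis by simp
  qed
  finally show ?thesis by (simp add: subfieldq_def)
qed

lemma trace_qn_power_q_power: "trace_qn q n ((x :: 'a) ^ q ^ j) = trace_qn q n x"
proof -
  have "trace_qn q n (x ^ q ^ j) = trace_qn q n x ^ q ^ j"
    by (simp add: trace_qn_def frobenius_sum power_mult[symmetric] mult.commute)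
  then show ?thesis using subfieldq_power_q_power[OF trace_qn_in_subfieldq] by simp
qed

lemma trace_qn_linq:
  assumes "over_subfieldq q u"
  shows "trace_qn q n (linq q u (x :: 'a)) = poly u 1 * trace_qn q n x"
proof -
  have "trace_qn q n (linq q u x) = (\<Sum>i\<le>degree u. coeff u i * trace_qn q n x)"
    using assms by (simp add: linq_def trace_qn_sum trace_qn_mult_subfieldq trace_qn_power_q_power)
  also have "\<dots> = poly u 1 * trace_qn q n x"
    by (simp add: poly_altdef sum_distrib_right)
  finally show ?thesis .
qed

lemma linq_X_power_minus_1: "linq q ([:0, 1:] ^ n - 1) (y :: 'a) = 0"
  by (simp add: linq_diff linq_one monom_altdef[of 1 n, simplified, symmetric] linq_monom power_q_power_n)

text \<open>Each fiber of the trace is the root set of a polynomial of degree \<open>q ^ (n - 1)\<close>, so the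
  image of the trace has at least \<open>q\<close> elements.\<close>
lemma range_trace_qn: "range (trace_qn q n :: 'a \<Rightarrow> 'a) = subfieldq q"
proof -
  define I where "I = range (trace_qn q n :: 'a \<Rightarrow> 'a)"
  have I_sub: "I \<subseteq> subfieldq q" using trace_qn_in_subfieldq by (auto simp: I_def)
  have fin: "finite (subfieldq q :: 'a set)" using q_gt_1 by (rule finite_subfieldq)
  have fiber: "card {x :: 'a. trace_qn q n x = t} \<le> q ^ (n - 1)" for t
  proof -
    have "card {x :: 'a. trace_qn q n x = t} \<le> q ^ degree (geometric_poly n :: 'a poly)"
      using card_linq_fiber_le[OF q_gt_1 geometric_poly_nonzero[OF n_pos]]
      by (simp add: trace_qn_eq_linq)
    also have "\<dots> \<le> q ^ (n - 1)"
      using q_gt_1 degree_geometric_poly_le by (simp add: power_increasing)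
    finally show ?thesis .
  qed
  have "(\<Union>t\<in>I. {x :: 'a. trace_qn q n x = t}) = UNIV" by (auto simp: I_def)
  then have "q * q ^ (n - 1) = card (\<Union>t\<in>I. {x :: 'a. trace_qn q n x = t})"
    using card_UNIV n_pos by (simp add: power_eq_if[of q n])
  also have "\<dots> \<le> (\<Sum>t\<in>I. card {x :: 'a. trace_qn q n x = t})"
    using finite_subset[OF I_sub fin] by (rule card_UN_le)
  also have "\<dots> \<le> card I * q ^ (n - 1)"
    using sum_bounded_above[of I "\<lambda>t. card {x :: 'a. trace_qn q n x = t}"] fiber by simp
  finally have "q \<le> card I" using q_gt_1 by simp
  then have "card (subfieldq q :: 'a set) \<le> card I"
    using card_subfieldq_le[OF q_gt_1, where 'a = 'a] by linarith
  then show ?thesis using card_seteq[OF fin I_sub] by (simp add: I_def)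
qed

section \<open>The permutation criterion\<close>

lemma linq_nonzero_if_degree_less:
  assumes "u \<noteq> 0" "degree u < n"
  shows "\<exists>y :: 'a. linq q u y \<noteq> 0"
proof (rule ccontr)
  assume "\<nexists>y :: 'a. linq q u y \<noteq> 0"
  then have "q ^ n \<le> q ^ degree u"
    using card_linq_fiber_le[OF q_gt_1 assms(1), of 0] card_UNIV by simp
  with assms(2) q_gt_1 show False by (simp add: power_strict_increasing leD)
qed

lemma linq_kernel_nontrivial_if_dvd:
  fixes d :: "'a poly"
  assumes "over_subfieldq q d" "d dvd [:0, 1:] ^ n - 1" "degree d > 0"
  shows "\<exists>z. z \<noteq> 0 \<and> linq q d z = 0"
proof -
  define X where "X = [:0, 1:] ^ n - (1 :: 'a poly)"
  define e where "e = X div d"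
  have X_eq: "X = d * e" using assms(2) by (simp add: X_def e_def)
  moreover have "X \<noteq> 0" unfolding X_def using n_pos by (rule X_power_minus_1_nonzero)
  ultimately have "degree X = degree d + degree e" "e \<noteq> 0"
    by (auto simp: degree_mult_eq)
  moreover have "degree X \<le> n" unfolding X_def by (rule degree_X_power_minus_1_le)
  ultimately have "degree e < n" using assms(3) by linarith
  then obtain y where y: "linq q e y \<noteq> 0"
    using linq_nonzero_if_degree_less \<open>e \<noteq> 0\<close> by blast
  have "over_subfieldq q e"
    unfolding e_def X_def using over_subfieldq_X_power_minus_1 assms(1,2) by (rule over_subfieldq_div)
  then have "linq q d (linq q e y) = linq q X y" by (simp add: X_eq linq_mult)
  then show ?thesis using y by (auto simp: X_def linq_X_power_minus_1)
qed

lemma linq_kernels_trivial_iff_coprime: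
  fixes g h :: "'a poly"
  assumes h: "over_subfieldq q h" and g: "over_subfieldq q g" and g_dvd: "g dvd [:0, 1:] ^ n - 1"
  shows "(\<forall>z. linq q g z = 0 \<and> linq q h z = 0 \<longrightarrow> z = 0) \<longleftrightarrow> gcd h g = 1"
proof
  assume trivial: "\<forall>z. linq q g z = 0 \<and> linq q h z = 0 \<longrightarrow> z = 0"
  show "gcd h g = 1"
  proof (rule ccontr)
    define d where "d = gcd h g"
    assume "gcd h g \<noteq> 1"
    have "g \<noteq> 0" using g_dvd X_power_minus_1_nonzero[OF n_pos] by auto
    then have "lead_coeff d = 1"
      using normalize_eq_self_iff_monic[of d] by (simp add: d_def)
    have deg: "degree d > 0"
    proof (rule ccontr)
      assume "\<not> degree d > 0"
      then have "d = [:lead_coeff d:]" using degree_0_id[of d] by simp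
      with \<open>lead_coeff d = 1\<close> \<open>gcd h g \<noteq> 1\<close> show False by (simp add: d_def one_pCons)
    qed
    have d: "over_subfieldq q d" using h g unfolding d_def by (rule over_subfieldq_gcd)
    have "d dvd [:0, 1:] ^ n - 1" unfolding d_def using gcd_dvd2 g_dvd by (rule dvd_trans)
    then obtain z where "z \<noteq> 0" "linq q d z = 0"
      using linq_kernel_nontrivial_if_dvd[OF d _ deg] by blast
    moreover have "linq q g z = 0" "linq q h z = 0"
      using linq_dvd_kernel[OF d] \<open>linq q d z = 0\<close> by (simp_all add: d_def)
    ultimately show False using trivial by blast
  qed
next
  assume "gcd h g = 1"
  obtain s t where "s * h + t * g = gcd h g"
    using bezout_coefficients_fst_snd by blast
  with \<open>gcd h g = 1\<close> have st: "s * h + t * g = 1" by simp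
  show "\<forall>z. linq q g z = 0 \<and> linq q h z = 0 \<longrightarrow> z = 0"
  proof (intro allI impI)
    fix z :: 'a assume "linq q g z = 0 \<and> linq q h z = 0"
    then have "linq q (s * h + t * g) z = 0"
      using h g by (simp add: linq_add linq_mult linq_arg_zero)
    then show "z = 0" by (simp add: st linq_one)
  qed
qed

lemma trace_qn_of_trace_form:
  fixes f h k :: "'a poly"
  assumes f: "over_subfieldq q f" and h: "over_subfieldq q h" and k: "over_subfieldq q k"
  shows "trace_qn q n (poly f (trace_qn q n x) + poly k (trace_qn q n x) * linq q h x) =
    of_nat n * poly f (trace_qn q n x) + poly h 1 * poly k (trace_qn q n x) * trace_qn q n x"
proof -
  have "poly f (trace_qn q n x) \<in> subfieldq q" "poly k (trace_qn q n x) \<in> subfieldq q"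
    using f k trace_qn_in_subfieldq by (simp_all add: subfieldq_poly)
  then show ?thesis
    by (simp add: trace_qn_add trace_qn_mult_subfieldq trace_qn_subfieldq trace_qn_linq[OF h])
qed

lemma inj_trace_form:
  fixes f h k :: "'a poly"
  assumes f: "over_subfieldq q f" and h: "over_subfieldq q h" and k: "over_subfieldq q k"
    and k_nonzero: "\<forall>x \<in> subfieldq q. poly k x \<noteq> 0"
  defines "P \<equiv> \<lambda>x. poly f (trace_qn q n x) + poly k (trace_qn q n x) * linq q h x"
    and "Q \<equiv> \<lambda>t. of_nat n * poly f t + poly h 1 * poly k t * t"
  assumes Q_inj: "inj_on Q (subfieldq q)"
    and kernel: "\<forall>z. trace_qn q n z = 0 \<and> linq q h z = 0 \<longrightarrow> z = 0"
  shows "inj P"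
proof (rule injI)
  have semiconj: "trace_qn q n (P z) = Q (trace_qn q n z)" for z
    unfolding P_def Q_def using f h k by (rule trace_qn_of_trace_form)
  fix x y assume "P x = P y"
  then have "Q (trace_qn q n x) = Q (trace_qn q n y)" unfolding semiconj[symmetric] by simp
  then have same_trace: "trace_qn q n x = trace_qn q n y"
    by (rule inj_onD[OF Q_inj _ trace_qn_in_subfieldq trace_qn_in_subfieldq])
  with \<open>P x = P y\<close> have "linq q h x = linq q h y"
    using k_nonzero trace_qn_in_subfieldq[of x] by (simp add: P_def)
  with same_trace have "trace_qn q n (x - y) = 0" "linq q h (x - y) = 0"
    by (simp_all add: trace_qn_diff linq_arg_diff)
  then have "x - y = 0" using kernel by blast
  then show "x = y" by simp
qed

lemma bij_trace_form_iff:
  fixes f h k :: "'a poly"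
  assumes f: "over_subfieldq q f" and h: "over_subfieldq q h" and k: "over_subfieldq q k"
    and k_nonzero: "\<forall>x \<in> subfieldq q. poly k x \<noteq> 0"
  defines "P \<equiv> \<lambda>x. poly f (trace_qn q n x) + poly k (trace_qn q n x) * linq q h x"
    and "Q \<equiv> \<lambda>t. of_nat n * poly f t + poly h 1 * poly k t * t"
  shows "bij P \<longleftrightarrow> bij_betw Q (subfieldq q) (subfieldq q) \<and>
    (\<forall>z. trace_qn q n z = 0 \<and> linq q h z = 0 \<longrightarrow> z = 0)"
proof
  assume "bij P"
  have "trace_qn q n (P x) = Q (trace_qn q n x)" for x
    unfolding P_def Q_def using f h k by (rule trace_qn_of_trace_form)
  with range_trace_qn finite_subfieldq[OF q_gt_1] bij_is_surj[OF \<open>bij P\<close>]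
  have "bij_betw Q (subfieldq q) (subfieldq q)"
    by (rule bij_betw_of_semiconj)
  moreover have "z = 0" if "trace_qn q n z = 0" "linq q h z = 0" for z
  proof -
    have "P z = P 0" using that by (simp add: P_def trace_qn_zero linq_arg_zero)
    then show ?thesis using bij_is_inj[OF \<open>bij P\<close>] by (simp add: inj_eq)
  qed
  ultimately show "bij_betw Q (subfieldq q) (subfieldq q) \<and>
    (\<forall>z. trace_qn q n z = 0 \<and> linq q h z = 0 \<longrightarrow> z = 0)" by blast
next
  assume "bij_betw Q (subfieldq q) (subfieldq q) \<and>
    (\<forall>z. trace_qn q n z = 0 \<and> linq q h z = 0 \<longrightarrow> z = 0)"
  then have "inj_on Q (subfieldq q)" and "\<forall>z. trace_qn q n z = 0 \<and> linq q h z = 0 \<longrightarrow> z = 0"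
    by (blast intro: bij_betw_imp_inj_on)+
  then have "inj P" unfolding P_def Q_def using f h k k_nonzero by (intro inj_trace_form)
  then show "bij P" using finite_field_UNIV finite_UNIV_inj_surj by (auto simp: bij_def)
qed

lemma bij_trace_form_iff_coprime:
  fixes f h k :: "'a poly"
  assumes f: "over_subfieldq q f" and h: "over_subfieldq q h" and k: "over_subfieldq q k"
    and k_nonzero: "\<forall>x \<in> subfieldq q. poly k x \<noteq> 0"
  defines "P \<equiv> \<lambda>x. poly f (trace_qn q n x) + poly k (trace_qn q n x) * linq q h x"
    and "Q \<equiv> \<lambda>t. of_nat n * poly f t + poly h 1 * poly k t * t"
  shows "bij P \<longleftrightarrow> gcd h (geometric_poly n) = 1 \<and> bij_betw Q (subfieldq q) (subfieldq q)"
proof -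
  have "geometric_poly n dvd [:0, 1:] ^ n - (1 :: 'a poly)"
    unfolding X_power_minus_1_eq by (rule dvd_triv_right)
  then have "(\<forall>z. trace_qn q n z = 0 \<and> linq q h z = 0 \<longrightarrow> z = 0) \<longleftrightarrow> gcd h (geometric_poly n) = 1"
    unfolding trace_qn_eq_linq by (rule linq_kernels_trivial_iff_coprime[OF h over_subfieldq_geometric_poly])
  then show ?thesis
    unfolding P_def Q_def bij_trace_form_iff[OF f h k k_nonzero] by (simp only: conj_commute)
qed

lemma bij_betw_Q_degenerate:
  fixes f h k :: "'a poly"
  assumes f: "over_subfieldq q f" and h: "over_subfieldq q h" and k: "over_subfieldq q k"
  defines "Q \<equiv> \<lambda>t. of_nat n * poly f t + poly h 1 * poly k t * t"
  shows "CHAR('a) dvd n \<Longrightarrow> poly h 1 \<noteq> 0 \<Longrightarrow>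
      bij_betw Q (subfieldq q) (subfieldq q) \<longleftrightarrow> bij_betw (\<lambda>x. poly k x * x) (subfieldq q) (subfieldq q)"
    and "\<not> CHAR('a) dvd n \<Longrightarrow> poly h 1 = 0 \<Longrightarrow>
      bij_betw Q (subfieldq q) (subfieldq q) \<longleftrightarrow> bij_betw (poly f) (subfieldq q) (subfieldq q)"
proof -
  define F where "F = (subfieldq q :: 'a set)"
  have fin: "finite F" using q_gt_1 by (simp add: F_def finite_subfieldq)
  have "poly h 1 \<in> F" using h by (simp add: F_def subfieldq_poly subfieldq_one)
  then have images: "poly f ` F \<subseteq> F" "(\<lambda>x. poly k x * x) ` F \<subseteq> F" "Q ` F \<subseteq> F"
    using f k by (auto simp: F_def Q_def intro!: subfieldq_add subfieldq_mult subfieldq_poly subfieldq_of_nat)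
  show "bij_betw Q F F \<longleftrightarrow> bij_betw (\<lambda>x. poly k x * x) F F"
    if "CHAR('a) dvd n" "poly h 1 \<noteq> 0"
  proof -
    have "Q = (\<lambda>x. poly h 1 * (poly k x * x))"
      using that(1) by (simp add: Q_def fun_eq_iff of_nat_eq_0_iff_char_dvd mult.assoc)
    then show ?thesis using bij_betw_scale_iff[OF that(2) fin images(2)] images(3) by simp
  qed
  show "bij_betw Q F F \<longleftrightarrow> bij_betw (poly f) F F"
    if "\<not> CHAR('a) dvd n" "poly h 1 = 0"
  proof -
    have n_nonzero: "of_nat n \<noteq> (0 :: 'a)" using that(1) by (simp add: of_nat_eq_0_iff_char_dvd)
    have "Q = (\<lambda>x. of_nat n * poly f x)" using that(2) by (simp add: Q_def)
    then show ?thesis using bij_betw_scale_iff[OF n_nonzero fin images(1)] images(3) by simp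
  qed
qed

lemma permutation_criterion_cases:
  fixes f h k :: "'a poly"
  assumes f: "over_subfieldq q f" and h: "over_subfieldq q h" and k: "over_subfieldq q k"
  defines "Q \<equiv> \<lambda>t. of_nat n * poly f t + poly h 1 * poly k t * t"
  shows "(gcd h (geometric_poly n) = 1 \<and> bij_betw Q (subfieldq q) (subfieldq q)) \<longleftrightarrow>
     (CHAR('a) dvd n \<and> gcd h ([:0, 1:] ^ n - 1) = 1 \<and>
        bij_betw (\<lambda>x. poly k x * x) (subfieldq q) (subfieldq q))
   \<or> (\<not> CHAR('a) dvd n \<and> gcd h ([:0, 1:] ^ n - 1) = [:-1, 1:] \<and>
        bij_betw (poly f) (subfieldq q) (subfieldq q))
   \<or> (\<not> CHAR('a) dvd n \<and> gcd h ([:0, 1:] ^ n - 1) = 1 \<and> bij_betw Q (subfieldq q) (subfieldq q))"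
proof (cases "poly h 1 = 0")
  case False
  have "gcd h ([:0, 1:] ^ n - 1) = gcd h (geometric_poly n)"
    using False by (rule gcd_X_power_minus_1_eq)
  moreover have "gcd h ([:0, 1:] ^ n - 1) \<noteq> [:-1, 1:]"
    using False by (rule gcd_neq_linear_if_poly_1_neq_0)
  moreover note bij_betw_Q_degenerate(1)[OF f h k _ False]
  ultimately show ?thesis by (cases "CHAR('a) dvd n") (simp_all add: Q_def)
next
  case True
  have "gcd h ([:0, 1:] ^ n - 1) \<noteq> 1"
    using True by (rule gcd_neq_1_if_poly_1_eq_0) simp
  moreover have "gcd h (geometric_poly n) \<noteq> 1" if "CHAR('a) dvd n"
    using True that
    by (intro gcd_neq_1_if_poly_1_eq_0) (simp_all add: poly_geometric_poly_1 of_nat_eq_0_iff_char_dvd)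
  moreover have "gcd h ([:0, 1:] ^ n - 1) = [:-1, 1:] \<longleftrightarrow> gcd h (geometric_poly n) = 1"
    if "\<not> CHAR('a) dvd n"
    using True that by (intro gcd_X_power_minus_1_eq_linear_iff) (simp_all add: of_nat_eq_0_iff_char_dvd)
  moreover note bij_betw_Q_degenerate(2)[OF f h k _ True]
  ultimately show ?thesis by (cases "CHAR('a) dvd n") (simp_all add: Q_def)
qed

end

end

theorem corollary3p3:
  fixes f h k :: "'a::{finite,field_gcd} poly"
    and p q n m :: nat
  assumes "prime p" and "CHAR('a) = p" and "m > 0" and "q = p ^ m"
    and "n > 0" and "card (UNIV :: 'a set) = q ^ n"
    and "\<forall>i. coeff f i \<in> subfieldq q"
    and "\<forall>i. coeff h i \<in> subfieldq q"
    and "\<forall>i. coeff k i \<in> subfieldq q"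
    and "\<forall>x \<in> subfieldq q. poly k x \<noteq> 0"
  defines "P \<equiv> (\<lambda>x. poly f (trace_qn q n x) + poly k (trace_qn q n x) * linq q h x)"
  shows "(bij P \<longleftrightarrow>
            gcd h (([:0, 1:] ^ n - 1) div [:-1, 1:]) = 1 \<and>
            bij_betw (\<lambda>x. of_nat n * poly f x + poly h 1 * poly k x * x)
              (subfieldq q) (subfieldq q))
       \<and> (bij P \<longleftrightarrow>
            (p dvd n \<and> gcd h ([:0, 1:] ^ n - 1) = 1 \<and>
               bij_betw (\<lambda>x. poly k x * x) (subfieldq q) (subfieldq q))
          \<or> (\<not> p dvd n \<and> gcd h ([:0, 1:] ^ n - 1) = [:-1, 1:] \<and>
               bij_betw (poly f) (subfieldq q) (subfieldq q))
          \<or> (\<not> p dvd n \<and> gcd h ([:0, 1:] ^ n - 1) = 1 \<and>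
               bij_betw (\<lambda>x. of_nat n * poly f x + poly h 1 * poly k x * x)
                 (subfieldq q) (subfieldq q)))"
proof -
  have char: "prime CHAR('a)" "q = CHAR('a) ^ m"
    using assms(1,2,4) by simp_all
  have "bij P \<longleftrightarrow> gcd h (geometric_poly n) = 1 \<and>
      bij_betw (\<lambda>x. of_nat n * poly f x + poly h 1 * poly k x * x) (subfieldq q) (subfieldq q)"
    unfolding P_def by (rule bij_trace_form_iff_coprime[OF char assms(3,5,6,7,8,9,10)])
  with permutation_criterion_cases[OF char assms(3,5,6,7,8,9), unfolded assms(2)]
  show ?thesis unfolding X_power_minus_1_div by (simp only:)
qed

end
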